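(* Let $r\ge0$. Let $\eta\in D(\mathbb{R}^3;\mathbb{R})$ be spherically symmetric with positive Fourier transform $\tilde\eta(\mathbf k)=(2\pi)^{-3/2}\int e^{-i\mathbf k\cdot\mathbf x}\eta(\mathbf x)d^3\mathbf x$, and let $\tau>0$ be so large that $\mathrm{supp}\,\eta$ lies in the open ball of radius $\tau$ (so that $f(t,\mathbf x)=\delta(t-\tau)\eta(\mathbf x)$ is supported in the future lightcone). Put $F(\mathbf k)=|\mathbf k|^{-1/2}e^{i|\mathbf k|\tau}\tilde\eta(\mathbf k)$ and $F_R(\mathbf k)=R^{3/2}F(R\mathbf k)$ for $R>0$. Then there is a sequence $R_n\to\infty$ such that $\lim_{n\to\infty}\|T_rF_{R_n}\|_2=\infty$; equivalently $\langle\Omega,W(T_rF_{R_n})\Omega\rangle=e^{-\|T_rF_{R_n}\|_2^2/4}\to0$ (the timelike asymptotic fluctuations of the field in the state $\omega_r$ diverge).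
   Context: Let $\varepsilon_i=2^{-(i-1)}$, $b_i=1/i$ ($i\ge1$), $\tau_i=\varepsilon_i^{\,r-1}$, $\mu(\mathbf k)=|\mathbf k|$, $u_s$ = multiplication by $e^{i\mu s}$ on $L^2(\mathbb{R}^3)$, $\zeta^\circ_i(|\mathbf k|)=(\log2)^{-1/2}\chi_{[\varepsilon_{i+1},\varepsilon_i]}(|\mathbf k|)|\mathbf k|^{-3/2}$, and $Q_i$ the orthogonal projection onto span$\{\zeta^\circ_i(|\mathbf k|)Y_{\ell m}(\mathbf k/|\mathbf k|):0\le\ell\le i,|m|\le\ell\}$, $Y_{\ell m}$ the real spherical harmonics. $T_r=1+\sum_i(b_i^{-1}-1)u_{-\tau_i}Q_i\,\mathrm{Re}\,u_{\tau_i}+i\sum_i(b_i-1)u_{-\tau_i}Q_i\,\mathrm{Im}\,u_{\tau_i}$, with Re, Im pointwise real/imaginary parts (the series converges on functions such as $F_R$). $\Omega$ is the Fock vacuum and $W(\zeta)=\exp(\tfrac{i}{\sqrt2}(a^*(\zeta)+a(\zeta)))$ the Weyl operators, with $\langle\Omega,W(\zeta)\Omega\rangle=e^{-\|\zeta\|_2^2/4}$; the state is $\omega_r(W(F))=\langle\Omega,W(T_rF)\Omega\rangle$. *)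

theory Defs
  imports "HOL-Analysis.Analysis"
begin

type_synonym R3 = "real^3"

definition l2_norm :: "(R3 \<Rightarrow> complex) \<Rightarrow> ennreal" where
  "l2_norm f = (let I = (\<integral>\<^sup>+ k. ennreal ((cmod (f k))\<^sup>2) \<partial>lborel)
                in if I = \<infinity> then \<infinity> else ennreal (sqrt (enn2real I)))"

definition l2_inner :: "(R3 \<Rightarrow> complex) \<Rightarrow> (R3 \<Rightarrow> complex) \<Rightarrow> complex" where
  "l2_inner f g = (\<integral> k. cnj (f k) * g k \<partial>lborel)"

definition orth_proj :: "(R3 \<Rightarrow> complex) set \<Rightarrow> (R3 \<Rightarrow> complex) \<Rightarrow> (R3 \<Rightarrow> complex)" where
  "orth_proj V f = (THE g. g \<in> V \<and> (\<forall>h\<in>V. l2_inner h (\<lambda>k. f k - g k) = 0))"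

coinductive smooth3 :: "(R3 \<Rightarrow> real) \<Rightarrow> bool" where
  "continuous_on UNIV f \<Longrightarrow>
   (\<forall>j. \<exists>g. (\<forall>x. ((\<lambda>t. f (x + t *\<^sub>R axis j 1)) has_real_derivative g x) (at 0)) \<and> smooth3 g)
   \<Longrightarrow> smooth3 f"

definition test_function :: "(R3 \<Rightarrow> real) \<Rightarrow> bool" where
  "test_function \<eta> \<longleftrightarrow> smooth3 \<eta> \<and> compact (closure {x. \<eta> x \<noteq> 0})"

definition fourier3 :: "(R3 \<Rightarrow> real) \<Rightarrow> R3 \<Rightarrow> complex" where
  "fourier3 \<eta> k = complex_of_real ((2 * pi) powr (-3/2)) *
      (\<integral> x. exp (- \<i> * complex_of_real (k \<bullet> x)) * complex_of_real (\<eta> x) \<partial>lborel)"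

definition eps :: "nat \<Rightarrow> real" where "eps i = 2 powr (- (real i - 1))"
definition bb :: "nat \<Rightarrow> real" where "bb i = 1 / real i"
definition tau :: "real \<Rightarrow> nat \<Rightarrow> real" where "tau r i = eps i powr (r - 1)"

definition u :: "real \<Rightarrow> (R3 \<Rightarrow> complex) \<Rightarrow> R3 \<Rightarrow> complex" where
  "u s f k = exp (\<i> * complex_of_real (norm k * s)) * f k"

definition zeta0 :: "nat \<Rightarrow> real \<Rightarrow> real" where
  "zeta0 i \<rho> = (ln 2) powr (-1/2) * indicator {eps (Suc i) .. eps i} \<rho> * \<rho> powr (-3/2)"

definition poly3 :: "(nat \<times> nat \<times> nat \<Rightarrow> complex) \<Rightarrow> nat \<Rightarrow> R3 \<Rightarrow> complex" where
  "poly3 c n x = (\<Sum>(a,b,d) \<in> {(a,b,d). a + b + d \<le> n}.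
       c (a,b,d) * complex_of_real (x$1 ^ a * x$2 ^ b * x$3 ^ d))"

text \<open>Laplacian of the polynomial vanishes, written on coefficients.\<close>
definition harmonic_coeffs :: "(nat \<times> nat \<times> nat \<Rightarrow> complex) \<Rightarrow> bool" where
  "harmonic_coeffs c \<longleftrightarrow> (\<forall>a b d.
     of_nat ((a+2)*(a+1)) * c (a+2,b,d) + of_nat ((b+2)*(b+1)) * c (a,b+2,d)
     + of_nat ((d+2)*(d+1)) * c (a,b,d+2) = 0)"

text \<open>span{Y_lm : 0 \<le> l \<le> n, |m| \<le> l} = restrictions to S^2 of harmonic polynomials
  of degree \<le> n (spherical harmonics of degree l = restrictions of harmonic homogeneous
  polynomials of degree l).\<close>
definition sph_harm_span :: "nat \<Rightarrow> (R3 \<Rightarrow> complex) set" where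
  "sph_harm_span n = {Y. \<exists>c. (\<forall>a b d. a + b + d > n \<longrightarrow> c (a,b,d) = 0) \<and> harmonic_coeffs c
                          \<and> (\<forall>x. norm x = 1 \<longrightarrow> Y x = poly3 c n x)}"

definition Vspace :: "nat \<Rightarrow> (R3 \<Rightarrow> complex) set" where
  "Vspace i = {(\<lambda>k. complex_of_real (zeta0 i (norm k)) * Y (sgn k)) | Y. Y \<in> sph_harm_span i}"

definition Q :: "nat \<Rightarrow> (R3 \<Rightarrow> complex) \<Rightarrow> R3 \<Rightarrow> complex" where
  "Q i = orth_proj (Vspace i)"

definition ReF :: "(R3 \<Rightarrow> complex) \<Rightarrow> R3 \<Rightarrow> complex" where
  "ReF f k = complex_of_real (Re (f k))"
definition ImF :: "(R3 \<Rightarrow> complex) \<Rightarrow> R3 \<Rightarrow> complex" where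
  "ImF f k = complex_of_real (Im (f k))"

text \<open>T_r F (series over i \<ge> 1, taken pointwise; at each k at most two terms are nonzero).\<close>
definition T :: "real \<Rightarrow> (R3 \<Rightarrow> complex) \<Rightarrow> R3 \<Rightarrow> complex" where
  "T r F k = F k
     + (\<Sum>n. let i = Suc n in complex_of_real (1 / bb i - 1) *
              u (- tau r i) (Q i (ReF (u (tau r i) F))) k)
     + \<i> * (\<Sum>n. let i = Suc n in complex_of_real (bb i - 1) *
              u (- tau r i) (Q i (ImF (u (tau r i) F))) k)"

end

theory Submission
  imports Defs "HOL-Library.Function_Algebras"
begin

text \<open>
  Fix a shell index \<open>i \<ge> 1\<close> and the scale \<open>R = 1 / (2 \<tau> eps i)\<close>, and put \<open>G = u (tau r i) F\<^sub>R\<close>.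
  On the open shell \<open>eps (i + 1) < |k| < eps i\<close> only the \<open>i\<close>-th terms of the two series
  defining \<open>T r\<close> survive, so there
  \<open>u (tau r i) (T r F\<^sub>R) = G + (i - 1) Q\<^sub>i (Re G) + \<i> (1/i - 1) Q\<^sub>i (Im G)\<close>.
  Pair this with the radial function \<open>zeta0 i\<close>, the \<open>l = 0\<close> element of \<open>V\<^sub>i\<close>: the projections
  drop out, and since \<open>zeta0 i\<close> is real the real part of the pairing is \<open>i \<langle>zeta0 i, Re G\<rangle>\<close>.
  For this \<open>R\<close> the phase of \<open>G\<close> stays in \<open>[0, 3/2]\<close> on the shell and the Fourier transform of
  \<open>\<eta>\<close> is bounded below on the annulus \<open>1/(4\<tau>) \<le> |s| \<le> 1/(2\<tau>)\<close>, so
  \<open>\<langle>zeta0 i, Re G\<rangle> \<ge> c > 0\<close> uniformly in \<open>i\<close>, while \<open>\<parallel>zeta0 i\<parallel>\<close> stays bounded.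
  Cauchy--Schwarz then gives \<open>\<parallel>T r F\<^sub>R\<parallel> \<ge> c' i\<close>, and \<open>R\<^sub>n = 2\<^sup>n / (2 \<tau>)\<close> does the job.
\<close>

section \<open>Dyadic shells\<close>

lemma eps_pos: "eps i > 0"
  by (simp add: eps_def)

lemma eps_Suc: "eps (Suc i) = eps i / 2"
  unfolding eps_def by (simp add: powr_diff powr_minus divide_simps powr_add)

lemma eps_antimono: "m \<le> n \<Longrightarrow> eps n \<le> eps m"
  unfolding eps_def by (intro powr_mono) auto

lemma eps_le_1: "1 \<le> i \<Longrightarrow> eps i \<le> 1"
  using eps_antimono[of 1 i] by (simp add: eps_def)

lemma eps_le_2: "eps i \<le> 2"
  using eps_antimono[of 0 i] by (simp add: eps_def)

definition shell :: "nat \<Rightarrow> R3 set" where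
  "shell i = {k. eps (Suc i) \<le> norm k \<and> norm k \<le> eps i}"

definition open_shell :: "nat \<Rightarrow> R3 set" where
  "open_shell i = {k. eps (Suc i) < norm k \<and> norm k < eps i}"

lemma closed_shell: "closed (shell i)"
  unfolding shell_def by (intro closed_Collect_conj closed_Collect_le continuous_intros)

lemma open_open_shell: "open (open_shell i)"
  unfolding open_shell_def by (intro open_Collect_conj open_Collect_less continuous_intros)

lemma sets_shell [measurable]: "shell i \<in> sets borel"
  by (rule borel_closed[OF closed_shell])

lemma sets_open_shell [measurable]: "open_shell i \<in> sets borel"
  by (rule borel_open[OF open_open_shell])

lemma open_shell_subset_shell: "open_shell i \<subseteq> shell i"
  by (auto simp: open_shell_def shell_def)

lemma shell_subset_cball: "shell i \<subseteq> cball 0 2"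
  using eps_le_2[of i] by (auto simp: shell_def)

lemma norm_pos_if_shell: "k \<in> shell i \<Longrightarrow> norm k > 0"
  using eps_pos[of "Suc i"] by (auto simp: shell_def)

lemma not_in_shell_if_open_shell:
  assumes "k \<in> open_shell i" "j \<noteq> i"
  shows "k \<notin> shell j"
proof (cases "j < i")
  case True
  then have "eps i \<le> eps (Suc j)" by (intro eps_antimono) auto
  then show ?thesis using assms(1) by (auto simp: shell_def open_shell_def)
next
  case False
  then have "eps j \<le> eps (Suc i)" using assms(2) by (intro eps_antimono) auto
  then show ?thesis using assms(1) by (auto simp: shell_def open_shell_def)
qed

lemma AE_open_shell: "AE k in lborel. k \<in> shell i \<longrightarrow> k \<in> open_shell i"
proof -
  have "sphere (0::R3) \<rho> \<in> null_sets lborel" for \<rho>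
    using negligible_sphere[of "0::R3" \<rho>]
    by (auto simp: null_sets_completion_iff negligible_iff_null_sets negligible_convex_frontier)
  from AE_not_in[OF this[of "eps i"]] AE_not_in[OF this[of "eps (Suc i)"]]
  show ?thesis
    by eventually_elim (auto simp: shell_def open_shell_def)
qed

lemma zeta0_eq_0: "k \<notin> shell i \<Longrightarrow> zeta0 i (norm k) = 0"
  unfolding zeta0_def shell_def by (auto simp: indicator_def)

lemma zeta0_shell: "k \<in> shell i \<Longrightarrow> zeta0 i (norm k) = ln 2 powr (-1/2) * norm k powr (-3/2)"
  unfolding zeta0_def shell_def by (auto simp: indicator_def)

lemma zeta0_nonneg: "zeta0 i \<rho> \<ge> 0"
  unfolding zeta0_def by (auto simp: indicator_def)

lemma zeta0_le: "zeta0 i (norm (k::R3)) \<le> ln 2 powr (-1/2) * eps (Suc i) powr (-3/2)"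
proof (cases "k \<in> shell i")
  case True
  then have "norm k powr (-3/2) \<le> eps (Suc i) powr (-3/2)"
    using eps_pos[of "Suc i"] by (intro powr_mono2') (auto simp: shell_def)
  then show ?thesis using True by (simp add: zeta0_shell)
qed (simp add: zeta0_eq_0)

lemma borel_measurable_zeta0 [measurable]: "(\<lambda>k::R3. zeta0 i (norm k)) \<in> borel_measurable borel"
  unfolding zeta0_def by measurable

lemma measure_shell: "measure lborel (shell i) = 7/6 * pi * eps i ^ 3"
proof -
  have "shell i = cball 0 (eps i) - ball 0 (eps i / 2)"
    using eps_pos[of i] by (auto simp: shell_def eps_Suc)
  moreover have "ball (0::R3) (eps i / 2) \<subseteq> cball 0 (eps i)"
    using eps_pos[of i] by auto
  ultimately have "measure lborel (shell i) = measure lborel (cball (0::R3) (eps i)) - measure lborel (ball (0::R3) (eps i / 2))"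
    using emeasure_lborel_cball_finite[of "0::R3" "eps i"] by (simp add: measure_Diff)
  also have "\<dots> = 7/6 * pi * eps i ^ 3"
    using eps_pos[of i] by (simp add: content_cball_conv_ball sphere_volume power_divide)
  finally show ?thesis .
qed

lemma emeasure_shell_finite: "emeasure lborel (shell i) < \<infinity>"
  by (rule le_less_trans[OF emeasure_mono[OF shell_subset_cball] emeasure_lborel_cball_finite]) simp

lemma zeta0_sq_le: "(zeta0 i (norm (k::R3)))\<^sup>2 \<le> 8 / (ln 2 * eps i ^ 3) * indicator (shell i) k"
proof (cases "k \<in> shell i")
  case True
  then have \<rho>: "eps i / 2 \<le> norm k" "0 < norm k"
    using norm_pos_if_shell[OF True] by (auto simp: shell_def eps_Suc)
  have "(ln (2::real) powr (-1/2))\<^sup>2 = ln 2 powr (-1)" "(norm k powr (-3/2))\<^sup>2 = norm k powr (-3)"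
    using \<rho>(2) by (subst powr_power; simp)+
  then have "(zeta0 i (norm k))\<^sup>2 = ln 2 powr (-1) * norm k powr (-3)"
    by (simp add: zeta0_shell[OF True] power_mult_distrib)
  also have "\<dots> = 1 / (ln 2 * norm k ^ 3)"
    using \<rho>(2) by (simp add: powr_minus divide_inverse)
  also have "\<dots> \<le> 1 / (ln 2 * (eps i / 2) ^ 3)"
    using \<rho> eps_pos[of i] by (intro divide_left_mono mult_left_mono power_mono mult_pos_pos) auto
  finally show ?thesis using True by (simp add: power_divide)
qed (simp add: zeta0_eq_0)

lemma nn_integral_zeta0_sq_le:
  "(\<integral>\<^sup>+k. ennreal ((zeta0 i (norm (k::R3)))\<^sup>2) \<partial>lborel) \<le> ennreal (28/3 * pi / ln 2)"
proof -
  have "(\<integral>\<^sup>+k. ennreal ((zeta0 i (norm (k::R3)))\<^sup>2) \<partial>lborel)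
      \<le> (\<integral>\<^sup>+k. ennreal (8 / (ln 2 * eps i ^ 3) * indicator (shell i) k) \<partial>lborel)"
    by (intro nn_integral_mono ennreal_leI zeta0_sq_le)
  also have "\<dots> = (\<integral>\<^sup>+k. ennreal (8 / (ln 2 * eps i ^ 3)) * indicator (shell i) k \<partial>lborel)"
    by (intro nn_integral_cong) (simp split: split_indicator)
  also have "\<dots> = ennreal (8 / (ln 2 * eps i ^ 3)) * ennreal (7/6 * pi * eps i ^ 3)"
  proof -
    have "emeasure lborel (shell i) = ennreal (7/6 * pi * eps i ^ 3)"
      using emeasure_shell_finite[of i] by (simp add: emeasure_eq_ennreal_measure measure_shell)
    then show ?thesis by (simp add: nn_integral_cmult_indicator)
  qed
  also have "\<dots> = ennreal (28/3 * pi / ln 2)"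
    using eps_pos[of i] by (simp flip: ennreal_mult)
  finally show ?thesis .
qed

section \<open>Bounded functions of bounded support\<close>

lemma borel_measurable_cnj [measurable]:
  "f \<in> borel_measurable M \<Longrightarrow> (\<lambda>x. cnj (f x)) \<in> borel_measurable M"
  by (rule borel_measurable_continuous_on[where f=cnj]) (auto intro: continuous_intros)

text \<open>On \<open>Linf_c\<close> the integral defining \<open>l2_inner\<close> always exists, so it is sesquilinear there;
  orthogonal projections onto the finite-dimensional spaces \<open>V\<^sub>i\<close> are built inside this class.\<close>

definition Linf_c :: "(R3 \<Rightarrow> complex) \<Rightarrow> bool" where
  "Linf_c g \<longleftrightarrow> g \<in> borel_measurable borel \<and> bounded (range g) \<and> bounded {k. g k \<noteq> 0}"

lemma Linf_cI:
  assumes "g \<in> borel_measurable borel" "\<And>k. cmod (g k) \<le> B" "\<And>k. g k \<noteq> 0 \<Longrightarrow> norm k \<le> \<rho>"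
  shows "Linf_c g"
  unfolding Linf_c_def bounded_iff using assms by blast

lemma Linf_c_measurable: "Linf_c g \<Longrightarrow> g \<in> borel_measurable borel"
  by (simp add: Linf_c_def)

lemma Linf_c_zero: "Linf_c 0"
  by (simp add: Linf_c_def zero_fun_def)

lemma Linf_c_add: "Linf_c f \<Longrightarrow> Linf_c g \<Longrightarrow> Linf_c (f + g)"
  unfolding Linf_c_def plus_fun_def
  by (auto intro: bounded_plus_comp bounded_subset[of "{k. f k \<noteq> 0} \<union> {k. g k \<noteq> 0}"])

lemma Linf_c_cmult: "Linf_c f \<Longrightarrow> Linf_c (\<lambda>k. c * f k)"
  unfolding Linf_c_def
  by (auto intro: bounded_linear_image[OF _ bounded_linear_mult_right, of "range f", simplified image_image]
      bounded_subset)

lemma Linf_c_diff: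
  assumes "Linf_c f" "Linf_c g"
  shows "Linf_c (f - g)"
proof -
  have "Linf_c (f + (\<lambda>k. -1 * g k))" by (intro Linf_c_add Linf_c_cmult assms)
  moreover have "f + (\<lambda>k. -1 * g k) = f - g" by (simp add: fun_eq_iff)
  ultimately show ?thesis by (simp only:)
qed

lemma integrable_cnj_mult:
  assumes "Linf_c h" and f: "f \<in> borel_measurable borel" "bounded (f ` {k. h k \<noteq> 0})"
  shows "integrable lborel (\<lambda>k. cnj (h k) * f k)"
proof -
  obtain Bh where Bh: "\<And>k. cmod (h k) \<le> Bh"
    using \<open>Linf_c h\<close> unfolding Linf_c_def bounded_iff by blast
  obtain \<rho> where \<rho>: "\<And>k. h k \<noteq> 0 \<Longrightarrow> norm k \<le> \<rho>"
    using \<open>Linf_c h\<close> unfolding Linf_c_def bounded_iff by blast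
  obtain Bf where Bf: "\<And>k. h k \<noteq> 0 \<Longrightarrow> cmod (f k) \<le> Bf" "Bf > 0"
    using f(2) unfolding bounded_pos by blast
  have [measurable]: "h \<in> borel_measurable borel" using assms Linf_c_def by blast
  have "Bh \<ge> 0" using Bh[of 0] norm_ge_zero order.trans by blast
  have bound: "norm (cnj (h k) * f k) \<le> norm (indicator (cball (0::R3) \<rho>) k *\<^sub>R (Bh * Bf))" for k
    using Bh[of k] Bf(1)[of k] \<rho>[of k] \<open>Bf > 0\<close> \<open>Bh \<ge> 0\<close>
    by (cases "h k = 0") (auto simp: norm_mult indicator_def intro: mult_mono)
  show ?thesis
  proof (rule Bochner_Integration.integrable_bound)
    show "integrable lborel (\<lambda>k. indicator (cball (0::R3) \<rho>) k *\<^sub>R (Bh * Bf))"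
      by (rule borel_integrable_compact) (auto intro: continuous_on_const)
    show "(\<lambda>k. cnj (h k) * f k) \<in> borel_measurable lborel"
      using f(1) by simp measurable
  qed (use bound in auto)
qed

lemma bounded_image_Linf_c: "Linf_c g \<Longrightarrow> bounded (g ` S)"
  unfolding Linf_c_def by (blast intro: bounded_subset)

lemma integrable_cnj_mult_Linf_c: "Linf_c h \<Longrightarrow> Linf_c f \<Longrightarrow> integrable lborel (\<lambda>k. cnj (h k) * f k)"
  by (rule integrable_cnj_mult) (auto simp: Linf_c_measurable bounded_image_Linf_c)

lemma l2_inner_add_right:
  "integrable lborel (\<lambda>k. cnj (h k) * f k) \<Longrightarrow> integrable lborel (\<lambda>k. cnj (h k) * g k) \<Longrightarrow>
    l2_inner h (\<lambda>k. f k + g k) = l2_inner h f + l2_inner h g"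
  unfolding l2_inner_def by (simp add: distrib_left)

lemma l2_inner_diff_right:
  "integrable lborel (\<lambda>k. cnj (h k) * f k) \<Longrightarrow> integrable lborel (\<lambda>k. cnj (h k) * g k) \<Longrightarrow>
    l2_inner h (\<lambda>k. f k - g k) = l2_inner h f - l2_inner h g"
  unfolding l2_inner_def by (simp add: right_diff_distrib)

lemma l2_inner_cmult_right: "l2_inner h (\<lambda>k. c * f k) = c * l2_inner h f"
  unfolding l2_inner_def by (simp add: mult.left_commute)

lemma l2_inner_ReF_ImF:
  assumes "integrable lborel (\<lambda>k. cnj (h k) * ReF f k)" "integrable lborel (\<lambda>k. cnj (h k) * ImF f k)"
  shows "l2_inner h f = l2_inner h (ReF f) + \<i> * l2_inner h (ImF f)"
proof -
  have "l2_inner h f = l2_inner h (\<lambda>k. ReF f k + \<i> * ImF f k)"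
    by (rule arg_cong[where f="l2_inner h"]) (simp add: fun_eq_iff ReF_def ImF_def complex_eq_iff)
  also have "\<dots> = l2_inner h (ReF f) + \<i> * l2_inner h (ImF f)"
    using assms integrable_mult_right[OF assms(2), of "\<i>"]
    by (subst l2_inner_add_right) (auto simp: l2_inner_cmult_right ac_simps)
  finally show ?thesis .
qed

lemma l2_inner_zero_left: "l2_inner 0 f = 0" "l2_inner (\<lambda>k. 0) f = 0"
  by (simp_all add: l2_inner_def)

lemma l2_inner_add_left:
  "integrable lborel (\<lambda>k. cnj (h k) * f k) \<Longrightarrow> integrable lborel (\<lambda>k. cnj (g k) * f k) \<Longrightarrow>
    l2_inner (h + g) f = l2_inner h f + l2_inner g f"
  unfolding l2_inner_def by (simp add: distrib_right)

lemma l2_inner_cmult_left: "l2_inner (\<lambda>k. c * h k) f = cnj c * l2_inner h f"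
  unfolding l2_inner_def by (simp add: mult.assoc)

lemma l2_inner_self_eq_0_imp_AE:
  assumes "Linf_c w" "l2_inner w w = 0"
  shows "AE k in lborel. w k = 0"
proof -
  have int: "integrable lborel (\<lambda>k. (cmod (w k))\<^sup>2)"
    using integrable_norm[OF integrable_cnj_mult_Linf_c[OF assms(1,1)]]
    by (simp add: norm_mult power2_eq_square)
  have "l2_inner w w = (\<integral>k. complex_of_real ((cmod (w k))\<^sup>2) \<partial>lborel)"
    unfolding l2_inner_def by (intro Bochner_Integration.integral_cong refl) (metis complex_norm_square mult.commute)
  then have "(\<integral>k. (cmod (w k))\<^sup>2 \<partial>lborel) = 0"
    using assms(2) by (simp only: integral_complex_of_real) simp
  then show ?thesis
    using integral_nonneg_eq_0_iff_AE[OF int] by auto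
qed

lemma l2_inner_null_left:
  assumes "Linf_c w" "l2_inner w w = 0"
  shows "l2_inner w f = 0"
  unfolding l2_inner_def
  using l2_inner_self_eq_0_imp_AE[OF assms] by (intro integral_eq_zero_AE) auto

lemma l2_inner_Cauchy_Schwarz:
  fixes h f :: "R3 \<Rightarrow> complex"
  assumes [measurable]: "h \<in> borel_measurable borel" "f \<in> borel_measurable borel"
  shows "ennreal ((cmod (l2_inner h f))\<^sup>2) \<le>
    (\<integral>\<^sup>+k. ennreal ((cmod (h k))\<^sup>2) \<partial>lborel) * (\<integral>\<^sup>+k. ennreal ((cmod (f k))\<^sup>2) \<partial>lborel)"
proof (cases "integrable lborel (\<lambda>k. cnj (h k) * f k)")
  case True
  have "ennreal (cmod (l2_inner h f)) \<le> (\<integral>\<^sup>+k. ennreal (cmod (h k)) * ennreal (cmod (f k)) \<partial>lborel)"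
    unfolding l2_inner_def using integral_norm_bound_ennreal[OF True]
    by (simp add: norm_mult ennreal_mult)
  then have "ennreal (cmod (l2_inner h f)) ^ 2 \<le> (\<integral>\<^sup>+k. ennreal (cmod (h k)) * ennreal (cmod (f k)) \<partial>lborel) ^ 2"
    by (rule power_mono) simp
  also have "\<dots> \<le> (\<integral>\<^sup>+k. ennreal (cmod (h k)) ^ 2 \<partial>lborel) * (\<integral>\<^sup>+k. ennreal (cmod (f k)) ^ 2 \<partial>lborel)"
    by (rule Cauchy_Schwarz_nn_integral) measurable
  finally show ?thesis
    by (simp add: ennreal_power)
qed (simp add: l2_inner_def not_integrable_integral_eq)

interpretation fun_space: vector_space "\<lambda>(c::complex) (f::R3 \<Rightarrow> complex) k. c * f k"
  by unfold_locales (auto simp: fun_eq_iff algebra_simps)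

lemma Linf_c_span: "S \<subseteq> Collect Linf_c \<Longrightarrow> fun_space.span S \<subseteq> Collect Linf_c"
  by (rule fun_space.span_minimal)
    (auto simp: fun_space.subspace_def Linf_c_zero Linf_c_add Linf_c_cmult)

lemma l2_inner_span_eq_0:
  assumes "S \<subseteq> Collect Linf_c" "Linf_c f" "\<forall>h\<in>S. l2_inner h f = 0" "h \<in> fun_space.span S"
  shows "l2_inner h f = 0"
proof -
  have "Linf_c h \<and> l2_inner h f = 0"
  proof (rule fun_space.span_induct[OF assms(4)])
    show "fun_space.subspace {h. Linf_c h \<and> l2_inner h f = 0}"
    proof (rule fun_space.subspaceI)
      show "0 \<in> {h. Linf_c h \<and> l2_inner h f = 0}"
        by (simp add: Linf_c_zero l2_inner_zero_left)
      show "g + h \<in> {h. Linf_c h \<and> l2_inner h f = 0}"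
        if "g \<in> {h. Linf_c h \<and> l2_inner h f = 0}" "h \<in> {h. Linf_c h \<and> l2_inner h f = 0}" for g h
        using that assms(2) by (simp add: Linf_c_add l2_inner_add_left integrable_cnj_mult_Linf_c)
      show "(\<lambda>k. c * h k) \<in> {h. Linf_c h \<and> l2_inner h f = 0}"
        if "h \<in> {h. Linf_c h \<and> l2_inner h f = 0}" for c h
        using that by (simp add: Linf_c_cmult l2_inner_cmult_left)
    qed
  qed (use assms in auto)
  then show ?thesis by simp
qed

lemma l2_inner_sub_component:
  assumes "Linf_c w" "Linf_c f"
  shows "l2_inner w (\<lambda>k. f k - l2_inner w f / l2_inner w w * w k) = 0"
proof (cases "l2_inner w w = 0")
  case True
  then show ?thesis using l2_inner_null_left[OF assms(1)] by blast
next
  case False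
  define a where "a = l2_inner w f / l2_inner w w"
  have "l2_inner w (\<lambda>k. f k - a * w k) = l2_inner w f - a * l2_inner w w"
    using integrable_cnj_mult_Linf_c[OF assms] integrable_cnj_mult_Linf_c[OF assms(1) Linf_c_cmult[OF assms(1)]]
    by (subst l2_inner_diff_right) (simp_all add: l2_inner_cmult_right)
  then show ?thesis using False by (simp add: a_def)
qed

lemma orth_proj_insert:
  assumes S: "S \<subseteq> Collect Linf_c" and "Linf_c v" "Linf_c f"
    and gf: "gf \<in> fun_space.span S" "\<forall>h\<in>fun_space.span S. l2_inner h (f - gf) = 0"
    and gv: "gv \<in> fun_space.span S" "\<forall>h\<in>fun_space.span S. l2_inner h (v - gv) = 0"
  shows "\<exists>g\<in>fun_space.span (insert v S). \<forall>h\<in>fun_space.span (insert v S). l2_inner h (f - g) = 0"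
proof -
  define w where "w = v - gv"
  \<comment> \<open>If \<open>l2_inner w w = 0\<close> then \<open>\<alpha> = 0\<close> (division by zero), and \<open>w\<close> is null anyway.\<close>
  define \<alpha> where "\<alpha> = l2_inner w (f - gf) / l2_inner w w"
  define g where "g = gf + (\<lambda>k. \<alpha> * w k)"
  have span_S: "fun_space.span S \<subseteq> Collect Linf_c" by (rule Linf_c_span[OF S])
  have L12: "Linf_c gf" "Linf_c gv" using gf(1) gv(1) span_S by auto
  have L3: "Linf_c w" unfolding w_def by (rule Linf_c_diff[OF \<open>Linf_c v\<close> L12(2)])
  have L: "Linf_c gf" "Linf_c gv" "Linf_c w" "Linf_c (f - gf)" "Linf_c (f - g)"
    unfolding g_def by (intro L12 L3 Linf_c_diff Linf_c_add Linf_c_cmult \<open>Linf_c f\<close>)+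
  have f_g: "f - g = (\<lambda>k. (f - gf) k - \<alpha> * w k)"
    by (simp add: g_def fun_eq_iff)
  have orth_S: "\<forall>h\<in>S. l2_inner h (f - g) = 0"
  proof
    fix h assume "h \<in> S"
    then have h: "h \<in> fun_space.span S" by (rule fun_space.span_base)
    then have "Linf_c h" using span_S by auto
    then have "l2_inner h (f - g) = l2_inner h (f - gf) - \<alpha> * l2_inner h w"
      unfolding f_g
      using integrable_cnj_mult_Linf_c[OF _ L(4)] integrable_cnj_mult_Linf_c[OF _ Linf_c_cmult[OF L(3)]]
      by (subst l2_inner_diff_right) (simp_all add: l2_inner_cmult_right)
    then show "l2_inner h (f - g) = 0"
      using gf gv h by (simp add: w_def)
  qed
  have "v = w + gv" by (simp add: w_def)
  then have "l2_inner v (f - g) = l2_inner w (f - g) + l2_inner gv (f - g)"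
    by (subst \<open>v = w + gv\<close>)
      (rule l2_inner_add_left[OF integrable_cnj_mult_Linf_c[OF L(3,5)] integrable_cnj_mult_Linf_c[OF L(2,5)]])
  also have "\<dots> = 0"
    using l2_inner_sub_component[OF L(3,4)] l2_inner_span_eq_0[OF S L(5) orth_S gv(1)]
    unfolding f_g \<alpha>_def by simp
  finally have "\<forall>h\<in>insert v S. l2_inner h (f - g) = 0"
    using orth_S by simp
  then have "\<forall>h\<in>fun_space.span (insert v S). l2_inner h (f - g) = 0"
    using l2_inner_span_eq_0[OF _ L(5)] S \<open>Linf_c v\<close> by blast
  moreover have "g \<in> fun_space.span (insert v S)"
    using gf(1) gv(1) fun_space.span_mono[of S "insert v S"] fun_space.span_base[of v "insert v S"]
    unfolding g_def w_def by (intro fun_space.span_add fun_space.span_scale fun_space.span_diff) auto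
  ultimately show ?thesis by blast
qed

lemma orth_proj_exists:
  assumes "finite S" "S \<subseteq> Collect Linf_c" "Linf_c f"
  shows "\<exists>g\<in>fun_space.span S. \<forall>h\<in>fun_space.span S. l2_inner h (f - g) = 0"
  using assms
proof (induction S arbitrary: f rule: finite_induct)
  case empty
  then show ?case by (auto simp: l2_inner_zero_left)
next
  case (insert v S)
  then have "S \<subseteq> Collect Linf_c" "Linf_c v" by auto
  with insert.IH[of f] insert.IH[of v] insert.prems(2) show ?case
    by (blast intro: orth_proj_insert)
qed

lemma l2_norm_ge:
  assumes "0 \<le> b" "ennreal (b\<^sup>2) \<le> (\<integral>\<^sup>+k. ennreal ((cmod (f k))\<^sup>2) \<partial>lborel)"
  shows "ennreal b \<le> l2_norm f"
proof (cases "(\<integral>\<^sup>+k. ennreal ((cmod (f k))\<^sup>2) \<partial>lborel) = \<infinity>")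
  case False
  then obtain I where I: "(\<integral>\<^sup>+k. ennreal ((cmod (f k))\<^sup>2) \<partial>lborel) = ennreal I" "0 \<le> I"
    by (cases "(\<integral>\<^sup>+k. ennreal ((cmod (f k))\<^sup>2) \<partial>lborel)") auto
  then have "b \<le> sqrt I"
    using assms by (auto intro: real_le_rsqrt)
  then show ?thesis using I by (simp add: l2_norm_def)
qed (simp add: l2_norm_def)

section \<open>The spaces \<open>V\<^sub>i\<close> and the projections \<open>Q\<^sub>i\<close>\<close>

lemma sum_apply: "(\<Sum>a\<in>A. f a) x = (\<Sum>a\<in>A. f a x)"
  by (induction A rule: infinite_finite_induct) auto

definition multi_indices :: "nat \<Rightarrow> (nat \<times> nat \<times> nat) set" where
  "multi_indices n = {(a, b, d). a + b + d \<le> n}"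

lemma finite_multi_indices: "finite (multi_indices n)"
  by (rule finite_subset[of _ "{0..n} \<times> {0..n} \<times> {0..n}"]) (auto simp: multi_indices_def)

definition monomial3 :: "nat \<times> nat \<times> nat \<Rightarrow> R3 \<Rightarrow> real" where
  "monomial3 p x = (case p of (a, b, d) \<Rightarrow> x$1 ^ a * x$2 ^ b * x$3 ^ d)"

lemma poly3_eq_sum: "poly3 c n x = (\<Sum>p\<in>multi_indices n. c p * complex_of_real (monomial3 p x))"
  unfolding poly3_def multi_indices_def monomial3_def by (intro sum.cong) auto

lemma abs_monomial3_le_1: "norm x \<le> 1 \<Longrightarrow> \<bar>monomial3 p x\<bar> \<le> 1"
proof -
  assume x: "norm x \<le> 1"
  have c: "\<bar>x$j\<bar> \<le> 1" for j using component_le_norm_cart[of x j] x by linarith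
  obtain a b d where p: "p = (a, b, d)" by (cases p) auto
  have "\<bar>x$1 ^ a * x$2 ^ b * x$3 ^ d\<bar> = \<bar>x$1\<bar> ^ a * \<bar>x$2\<bar> ^ b * \<bar>x$3\<bar> ^ d"
    by (simp add: abs_mult power_abs)
  also have "\<dots> \<le> 1 * 1 * 1"
    using c by (intro mult_mono power_le_one) auto
  finally show ?thesis by (simp add: p monomial3_def)
qed

lemma norm_poly3_le: "norm x \<le> 1 \<Longrightarrow> cmod (poly3 c n x) \<le> (\<Sum>p\<in>multi_indices n. cmod (c p))"
  unfolding poly3_eq_sum
  by (rule order.trans[OF norm_sum sum_mono])
    (auto simp: norm_mult intro: mult_right_le_one_le abs_monomial3_le_1)

lemma continuous_on_poly3: "continuous_on UNIV (poly3 c n)"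
proof -
  have "continuous_on UNIV (monomial3 p)" for p
    by (cases p) (auto simp: monomial3_def intro!: continuous_intros)
  then have "continuous_on UNIV (\<lambda>x. \<Sum>p\<in>multi_indices n. c p * complex_of_real (monomial3 p x))"
    by (intro continuous_intros continuous_on_compose2[where g=complex_of_real]) auto
  then show ?thesis unfolding poly3_eq_sum[abs_def] .
qed

definition Vcoeffs :: "nat \<Rightarrow> (nat \<times> nat \<times> nat \<Rightarrow> complex) set" where
  "Vcoeffs i = {c. (\<forall>a b d. a + b + d > i \<longrightarrow> c (a, b, d) = 0) \<and> harmonic_coeffs c}"

definition Vfun :: "nat \<Rightarrow> (nat \<times> nat \<times> nat \<Rightarrow> complex) \<Rightarrow> R3 \<Rightarrow> complex" where
  "Vfun i c k = complex_of_real (zeta0 i (norm k)) * poly3 c i (sgn k)"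

lemma Vspace_eq_Vfun_image: "Vspace i = Vfun i ` Vcoeffs i"
proof safe
  fix g assume "g \<in> Vspace i"
  then obtain Y c where g: "g = (\<lambda>k. complex_of_real (zeta0 i (norm k)) * Y (sgn k))"
    and c: "c \<in> Vcoeffs i" and Y: "\<forall>x. norm x = 1 \<longrightarrow> Y x = poly3 c i x"
    unfolding Vspace_def sph_harm_span_def Vcoeffs_def by blast
  have "g k = Vfun i c k" for k
    using Y zeta0_eq_0[of 0 i] norm_pos_if_shell[of 0 i]
    by (cases "k = 0") (auto simp: g Vfun_def norm_sgn)
  then show "g \<in> Vfun i ` Vcoeffs i" using c by blast
next
  fix c assume "c \<in> Vcoeffs i"
  then show "Vfun i c \<in> Vspace i"
    unfolding Vspace_def sph_harm_span_def Vcoeffs_def Vfun_def by blast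
qed

lemma harmonic_coeffs_lincomb:
  assumes "harmonic_coeffs c1" "harmonic_coeffs c2"
  shows "harmonic_coeffs (\<lambda>p. x * c1 p + c2 p)"
  unfolding harmonic_coeffs_def
proof (intro allI)
  fix a b d
  let ?L = "\<lambda>c::nat \<times> nat \<times> nat \<Rightarrow> complex. of_nat ((a+2)*(a+1)) * c (a+2,b,d)
    + of_nat ((b+2)*(b+1)) * c (a,b+2,d) + of_nat ((d+2)*(d+1)) * c (a,b,d+2)"
  have "?L (\<lambda>p. x * c1 p + c2 p) = x * ?L c1 + ?L c2"
    by (simp add: algebra_simps)
  moreover have "?L c1 = 0" "?L c2 = 0"
    using assms unfolding harmonic_coeffs_def by blast+
  ultimately show "?L (\<lambda>p. x * c1 p + c2 p) = 0" by simp
qed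

lemma Vfun_lincomb: "Vfun i (\<lambda>p. x * c1 p + c2 p) = (\<lambda>k. x * Vfun i c1 k) + Vfun i c2"
  by (auto simp: fun_eq_iff Vfun_def poly3_eq_sum sum.distrib sum_distrib_left sum_apply algebra_simps)

lemma subspace_Vspace: "fun_space.subspace (Vspace i)"
proof -
  have zero: "(\<lambda>p. 0) \<in> Vcoeffs i" "Vfun i (\<lambda>p. 0) = 0"
    by (simp_all add: Vcoeffs_def harmonic_coeffs_def fun_eq_iff Vfun_def poly3_def)
  have lincomb: "(\<lambda>k. x * Vfun i c1 k) + Vfun i c2 \<in> Vfun i ` Vcoeffs i"
    if "c1 \<in> Vcoeffs i" "c2 \<in> Vcoeffs i" for x c1 c2
    using that harmonic_coeffs_lincomb[of c1 c2 x]
    by (auto simp: Vcoeffs_def simp flip: Vfun_lincomb intro!: imageI)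
  show ?thesis
    unfolding Vspace_eq_Vfun_image
  proof (rule fun_space.subspaceI)
    show "0 \<in> Vfun i ` Vcoeffs i" using zero by force
    show "g + h \<in> Vfun i ` Vcoeffs i" if "g \<in> Vfun i ` Vcoeffs i" "h \<in> Vfun i ` Vcoeffs i" for g h
      using that lincomb[of _ _ 1] by auto
    show "(\<lambda>k. x * g k) \<in> Vfun i ` Vcoeffs i" if "g \<in> Vfun i ` Vcoeffs i" for x g
      using that zero lincomb[of _ "\<lambda>p. 0" x] by auto
  qed
qed

lemma Vfun_eq_0: "k \<notin> shell i \<Longrightarrow> Vfun i c k = 0"
  by (simp add: Vfun_def zeta0_eq_0)

lemma Vspace_eq_0: "h \<in> Vspace i \<Longrightarrow> k \<notin> shell i \<Longrightarrow> h k = 0"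
  by (auto simp: Vspace_eq_Vfun_image Vfun_eq_0)

lemma Linf_c_Vfun: "Linf_c (Vfun i c)"
proof (rule Linf_cI)
  have [measurable]: "(\<lambda>k. poly3 c i (sgn k)) \<in> borel_measurable borel"
    using measurable_comp[OF borel_measurable_sgn borel_measurable_continuous_onI[OF continuous_on_poly3]]
    by (simp add: comp_def)
  show "Vfun i c \<in> borel_measurable borel"
    unfolding Vfun_def[abs_def] by measurable
  show "cmod (Vfun i c k) \<le> ln 2 powr (-1/2) * eps (Suc i) powr (-3/2) * (\<Sum>p\<in>multi_indices i. cmod (c p))" for k
    unfolding Vfun_def norm_mult norm_of_real abs_of_nonneg[OF zeta0_nonneg]
    by (intro mult_mono zeta0_le norm_poly3_le) (auto simp: norm_sgn sum_nonneg zeta0_nonneg)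
  show "Vfun i c k \<noteq> 0 \<Longrightarrow> norm k \<le> 2" for k
    using Vfun_eq_0 shell_subset_cball by fastforce
qed

lemma Linf_c_Vspace: "h \<in> Vspace i \<Longrightarrow> Linf_c h"
  by (auto simp: Vspace_eq_Vfun_image Linf_c_Vfun)

lemma Vspace_finite_basis: "\<exists>B. finite B \<and> B \<subseteq> Vspace i \<and> fun_space.span B = Vspace i"
proof -
  define M where "M = (\<lambda>p k. complex_of_real (zeta0 i (norm k)) * complex_of_real (monomial3 p (sgn k))) ` multi_indices i"
  have "(\<lambda>k. complex_of_real (zeta0 i (norm k)) * complex_of_real (monomial3 p (sgn k))) \<in> fun_space.span M"
    if "p \<in> multi_indices i" for p
    using that unfolding M_def by (intro fun_space.span_base imageI)
  moreover have "Vfun i c = (\<Sum>p\<in>multi_indices i.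
      (\<lambda>k. c p * (complex_of_real (zeta0 i (norm k)) * complex_of_real (monomial3 p (sgn k)))))" for c
    by (simp add: fun_eq_iff Vfun_def poly3_eq_sum sum_distrib_left sum_apply algebra_simps)
  ultimately have "Vspace i \<subseteq> fun_space.span M"
    unfolding Vspace_eq_Vfun_image by (auto intro!: fun_space.span_sum fun_space.span_scale)
  moreover obtain B where B: "B \<subseteq> Vspace i" "fun_space.independent B" "Vspace i \<subseteq> fun_space.span B"
    using fun_space.basis_exists by metis
  moreover have "finite M" by (simp add: M_def finite_multi_indices)
  ultimately have "finite B"
    using fun_space.independent_span_bound[of M B] by blast
  moreover have "fun_space.span B = Vspace i"
    using B fun_space.span_minimal[OF B(1) subspace_Vspace] by auto
  ultimately show ?thesis using B by blast
qed

lemma continuous_on_open_AE_eq_0: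
  fixes f :: "'a::euclidean_space \<Rightarrow> 'b::real_normed_vector"
  assumes "open U" "continuous_on U f" "AE x in lborel. x \<in> U \<longrightarrow> f x = 0" "x \<in> U"
  shows "f x = 0"
proof (rule ccontr)
  assume "f x \<noteq> 0"
  have "open (U \<inter> f -` (- {0}))"
    by (rule continuous_open_preimage[OF assms(2,1)]) auto
  then obtain \<delta> where \<delta>: "\<delta> > 0" "ball x \<delta> \<subseteq> U \<inter> f -` (- {0})"
    using \<open>f x \<noteq> 0\<close> assms(4) open_contains_ball by blast
  from assms(3) obtain N where N: "{x. \<not> (x \<in> U \<longrightarrow> f x = 0)} \<subseteq> N" "N \<in> null_sets lborel"
    by (force simp: eventually_ae_filter)
  have "ball x \<delta> \<in> null_sets lborel"
    by (rule null_sets_subset[OF N(2)]) (use \<delta> N(1) in auto)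
  then show False
    using content_ball_pos[OF \<delta>(1), of x] by (simp add: null_sets_def measure_def)
qed

lemma Vspace_null_eq_0:
  assumes h: "h \<in> Vspace i" and "l2_inner h h = 0"
  shows "h = 0"
proof
  fix k
  obtain c where hc: "h = Vfun i c" using h unfolding Vspace_eq_Vfun_image by auto
  have ae: "AE x in lborel. h x = 0"
    by (rule l2_inner_self_eq_0_imp_AE[OF Linf_c_Vspace[OF h] assms(2)])
  have zeta0_pos: "zeta0 i (norm x) > 0" if "x \<in> open_shell i" for x
    using that open_shell_subset_shell norm_pos_if_shell by (fastforce simp: zeta0_shell)
  have "AE x in lborel. x \<in> open_shell i \<longrightarrow> poly3 c i (sgn x) = 0"
    using ae by eventually_elim (auto simp: hc Vfun_def dest: zeta0_pos)
  moreover have "continuous_on (open_shell i) (\<lambda>x. poly3 c i (sgn x))"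
    using open_shell_subset_shell norm_pos_if_shell
    by (intro continuous_on_compose2[OF continuous_on_poly3] continuous_on_sgn continuous_on_id) force+
  ultimately have poly_0: "poly3 c i (sgn x) = 0" if "x \<in> open_shell i" for x
    using continuous_on_open_AE_eq_0[OF open_open_shell] that by blast
  show "h k = 0 k"
  proof (cases "k \<in> shell i")
    case True
    \<comment> \<open>Move \<open>k\<close> radially into the open shell; \<open>sgn\<close> does not change.\<close>
    define k' where "k' = ((3/4 * eps i) / norm k) *\<^sub>R k"
    have "norm k > 0" using True by (rule norm_pos_if_shell)
    then have "k' \<in> open_shell i" "sgn k' = sgn k"
      using eps_pos[of i] by (auto simp: k'_def open_shell_def eps_Suc sgn_scaleR)
    then show ?thesis using poly_0[of k'] by (simp add: hc Vfun_def)
  qed (simp add: hc Vfun_eq_0)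
qed

lemma zeta0_in_Vspace: "(\<lambda>k. complex_of_real (zeta0 i (norm k))) \<in> Vspace i"
proof -
  define c where "c = (\<lambda>q::nat \<times> nat \<times> nat. if q = (0, 0, 0) then (1::complex) else 0)"
  have "c \<in> Vcoeffs i" by (auto simp: Vcoeffs_def harmonic_coeffs_def c_def)
  moreover have "poly3 c i x = 1" for x
    using finite_multi_indices[of i]
    by (simp add: poly3_eq_sum c_def if_distrib[of "\<lambda>x. x * _"] monomial3_def multi_indices_def cong: if_cong)
  then have "Vfun i c = (\<lambda>k. complex_of_real (zeta0 i (norm k)))"
    by (simp add: fun_eq_iff Vfun_def)
  ultimately show ?thesis unfolding Vspace_eq_Vfun_image by force
qed

lemma Vspace_orth_proj_unique:
  assumes g: "g \<in> Vspace i" "\<forall>h\<in>Vspace i. l2_inner h (f - g) = 0"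
    and g': "g' \<in> Vspace i" "\<forall>h\<in>Vspace i. l2_inner h (f - g') = 0" and "Linf_c f"
  shows "g' = g"
proof -
  have d: "g' - g \<in> Vspace i"
    using fun_space.subspace_diff[OF subspace_Vspace g'(1) g(1)] by simp
  have L: "Linf_c (g' - g)" "Linf_c (f - g)" "Linf_c (f - g')"
    using Linf_c_Vspace g(1) g'(1) d \<open>Linf_c f\<close> by (auto intro: Linf_c_diff)
  have "l2_inner (g' - g) (g' - g) = l2_inner (g' - g) (\<lambda>k. (f - g) k - (f - g') k)"
    by (simp add: fun_diff_def)
  also have "\<dots> = 0"
    using g(2) g'(2) d integrable_cnj_mult_Linf_c[OF L(1) L(2)] integrable_cnj_mult_Linf_c[OF L(1) L(3)]
    by (subst l2_inner_diff_right) simp_all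
  finally show ?thesis using Vspace_null_eq_0[OF d] by simp
qed

lemma Vspace_orth_proj_exists:
  assumes "Linf_c f"
  shows "\<exists>g\<in>Vspace i. \<forall>h\<in>Vspace i. l2_inner h (f - g) = 0"
proof -
  obtain S where S: "finite S" "S \<subseteq> Vspace i" "fun_space.span S = Vspace i"
    using Vspace_finite_basis by blast
  then have "S \<subseteq> Collect Linf_c" using Linf_c_Vspace by blast
  from orth_proj_exists[OF S(1) this assms] show ?thesis
    unfolding S(3) .
qed

lemma Q_Vspace:
  assumes f: "f \<in> borel_measurable borel" "bounded (f ` shell i)"
  shows "Q i f \<in> Vspace i" and "h \<in> Vspace i \<Longrightarrow> l2_inner h (\<lambda>k. f k - Q i f k) = 0"
proof -
  \<comment> \<open>\<open>V\<^sub>i\<close> lives on the shell, so it suffices to project the restriction of \<open>f\<close>, which is in \<open>Linf_c\<close>.\<close>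
  define f' where "f' = (\<lambda>k. complex_of_real (indicator (shell i) k) * f k)"
  obtain B where B: "\<forall>k\<in>shell i. cmod (f k) \<le> B" "B > 0" using f(2) unfolding bounded_pos by blast
  have Lf': "Linf_c f'"
  proof (rule Linf_cI)
    show "f' \<in> borel_measurable borel" unfolding f'_def using f(1) by measurable
    show "cmod (f' k) \<le> B" for k using B by (auto simp: f'_def indicator_def norm_mult)
    show "f' k \<noteq> 0 \<Longrightarrow> norm k \<le> 2" for k
      using shell_subset_cball[of i] by (auto simp: f'_def indicator_def split: if_splits)
  qed
  have same: "l2_inner h (\<lambda>k. f k - g k) = l2_inner h (f' - g)" if "h \<in> Vspace i" for h g
    unfolding l2_inner_def
    by (intro Bochner_Integration.integral_cong refl) (use Vspace_eq_0[OF that] in \<open>auto simp: f'_def indicator_def\<close>)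
  define P where "P = (\<lambda>g. g \<in> Vspace i \<and> (\<forall>h\<in>Vspace i. l2_inner h (\<lambda>k. f k - g k) = 0))"
  obtain g where "g \<in> Vspace i" "\<forall>h\<in>Vspace i. l2_inner h (f' - g) = 0"
    using Vspace_orth_proj_exists[OF Lf'] by blast
  then have "P g" "\<And>g'. P g' \<Longrightarrow> g' = g"
    using same Vspace_orth_proj_unique[OF _ _ _ _ Lf'] by (auto simp: P_def)
  then have "P (Q i f)"
    unfolding Q_def orth_proj_def P_def[symmetric] by (rule theI)
  then show "Q i f \<in> Vspace i" "h \<in> Vspace i \<Longrightarrow> l2_inner h (\<lambda>k. f k - Q i f k) = 0"
    by (auto simp: P_def)
qed

lemma borel_measurable_Q:
  assumes "f \<in> borel_measurable borel" "bounded (f ` shell i)"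
  shows "Q i f \<in> borel_measurable borel"
  using Linf_c_measurable[OF Linf_c_Vspace[OF Q_Vspace(1)[OF assms]]] .

lemma integrable_cnj_mult_Vspace:
  assumes "h \<in> Vspace i" "f \<in> borel_measurable borel" "bounded (f ` shell i)"
  shows "integrable lborel (\<lambda>k. cnj (h k) * f k)"
proof -
  have "f ` {k. h k \<noteq> 0} \<subseteq> f ` shell i" using Vspace_eq_0[OF assms(1)] by blast
  then show ?thesis
    using assms by (intro integrable_cnj_mult[OF Linf_c_Vspace]) (auto intro: bounded_subset)
qed

lemma l2_inner_indicator_open_shell:
  assumes "h \<in> Vspace i" "\<Phi> \<in> borel_measurable borel"
  shows "l2_inner h (\<lambda>k. indicator (open_shell i) k * \<Phi> k) = l2_inner h \<Phi>"
  unfolding l2_inner_def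
proof (rule integral_cong_AE)
  have [measurable]: "h \<in> borel_measurable borel" "\<Phi> \<in> borel_measurable borel"
    using Linf_c_measurable[OF Linf_c_Vspace[OF assms(1)]] assms(2) .
  show "(\<lambda>k. cnj (h k) * (indicator (open_shell i) k * \<Phi> k)) \<in> borel_measurable lborel"
    "(\<lambda>k. cnj (h k) * \<Phi> k) \<in> borel_measurable lborel"
    by simp_all measurable
  show "AE k in lborel. cnj (h k) * (indicator (open_shell i) k * \<Phi> k) = cnj (h k) * \<Phi> k"
    using AE_open_shell[of i] by eventually_elim (auto simp: indicator_def Vspace_eq_0[OF assms(1)])
qed

lemma l2_inner_Q:
  assumes "f \<in> borel_measurable borel" "bounded (f ` shell i)" "h \<in> Vspace i"
  shows "l2_inner h (Q i f) = l2_inner h f"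
proof -
  have "integrable lborel (\<lambda>k. cnj (h k) * Q i f k)"
    using assms by (intro integrable_cnj_mult_Linf_c Linf_c_Vspace[OF Q_Vspace(1)] Linf_c_Vspace)
  then show ?thesis
    using Q_Vspace(2)[OF assms] integrable_cnj_mult_Vspace[OF assms(3,1,2)]
    by (simp add: l2_inner_diff_right)
qed

section \<open>The operator \<open>T\<^sub>r\<close> on a shell\<close>

lemma borel_measurable_u [measurable]: "f \<in> borel_measurable borel \<Longrightarrow> u s f \<in> borel_measurable borel"
  unfolding u_def[abs_def] by measurable

lemma borel_measurable_ReF [measurable]: "f \<in> borel_measurable borel \<Longrightarrow> ReF f \<in> borel_measurable borel"
  unfolding ReF_def[abs_def] by measurable

lemma borel_measurable_ImF [measurable]: "f \<in> borel_measurable borel \<Longrightarrow> ImF f \<in> borel_measurable borel"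
  unfolding ImF_def[abs_def] by measurable

lemma norm_u [simp]: "cmod (u s f k) = cmod (f k)"
  by (simp add: u_def norm_mult)

lemma bounded_image_norm_le:
  fixes f :: "'a \<Rightarrow> 'b::real_normed_vector" and g :: "'a \<Rightarrow> 'c::real_normed_vector"
  assumes "bounded (f ` S)" "\<And>x. x \<in> S \<Longrightarrow> norm (g x) \<le> norm (f x)"
  shows "bounded (g ` S)"
proof -
  obtain a where "\<forall>x\<in>S. norm (f x) \<le> a" using assms(1) unfolding bounded_iff by blast
  then show ?thesis unfolding bounded_iff using assms(2) by (auto intro: order.trans)
qed

lemma bounded_ReF_ImF_u:
  assumes "bounded (f ` S)"
  shows "bounded (ReF (u s f) ` S)" "bounded (ImF (u s f) ` S)" "bounded (u s f ` S)"
proof -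
  have "cmod (ReF (u s f) x) \<le> cmod (f x)" "cmod (ImF (u s f) x) \<le> cmod (f x)" "cmod (u s f x) \<le> cmod (f x)" for x
    using abs_Re_le_cmod[of "u s f x"] abs_Im_le_cmod[of "u s f x"] by (simp_all add: ReF_def ImF_def)
  then show "bounded (ReF (u s f) ` S)" "bounded (ImF (u s f) ` S)" "bounded (u s f ` S)"
    by (blast intro: bounded_image_norm_le[OF assms])+
qed

lemma T_on_open_shell:
  assumes F: "F \<in> borel_measurable borel" "\<And>j. bounded (F ` shell j)" and "1 \<le> i" "k \<in> open_shell i"
  shows "T r F k = F k
     + complex_of_real (1 / bb i - 1) * u (- tau r i) (Q i (ReF (u (tau r i) F))) k
     + \<i> * (complex_of_real (bb i - 1) * u (- tau r i) (Q i (ImF (u (tau r i) F))) k)"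
proof -
  have [measurable]: "F \<in> borel_measurable borel" by (rule F(1))
  have Q_0: "Q j (ReF (u s F)) k = 0" "Q j (ImF (u s F)) k = 0" if "j \<noteq> i" for j s
  proof -
    have "k \<notin> shell j" by (rule not_in_shell_if_open_shell[OF assms(4) that])
    moreover have "ReF (u s F) \<in> borel_measurable borel" "ImF (u s F) \<in> borel_measurable borel"
      by measurable
    ultimately show "Q j (ReF (u s F)) k = 0" "Q j (ImF (u s F)) k = 0"
      using Vspace_eq_0[OF Q_Vspace(1)] bounded_ReF_ImF_u[OF F(2)] by blast+
  qed
  obtain n0 where i: "i = Suc n0" using \<open>1 \<le> i\<close> by (cases i) auto
  have "(\<Sum>n. let j = Suc n in complex_of_real (1 / bb j - 1) * u (- tau r j) (Q j (ReF (u (tau r j) F))) k) =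
      complex_of_real (1 / bb i - 1) * u (- tau r i) (Q i (ReF (u (tau r i) F))) k"
    by (subst suminf_finite[of "{n0}"]) (auto simp: Let_def u_def Q_0 i)
  moreover have "(\<Sum>n. let j = Suc n in complex_of_real (bb j - 1) * u (- tau r j) (Q j (ImF (u (tau r j) F))) k) =
      complex_of_real (bb i - 1) * u (- tau r i) (Q i (ImF (u (tau r i) F))) k"
    by (subst suminf_finite[of "{n0}"]) (auto simp: Let_def u_def Q_0 i)
  ultimately show ?thesis unfolding T_def by simp
qed

lemma u_T_on_open_shell:
  assumes F: "F \<in> borel_measurable borel" "\<And>j. bounded (F ` shell j)" and "1 \<le> i" "k \<in> open_shell i"
  shows "u (tau r i) (T r F) k = u (tau r i) F k
     + complex_of_real (real i - 1) * Q i (ReF (u (tau r i) F)) k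
     + \<i> * complex_of_real (1 / real i - 1) * Q i (ImF (u (tau r i) F)) k"
  using \<open>1 \<le> i\<close>
  by (simp add: u_def T_on_open_shell[OF assms] bb_def algebra_simps exp_minus_inverse)

lemma indicator_open_shell_u_T:
  assumes F: "F \<in> borel_measurable borel" "\<And>j. bounded (F ` shell j)" and "1 \<le> i"
  shows "indicator (open_shell i) k * u (tau r i) (T r F) k = indicator (open_shell i) k *
    (u (tau r i) F k + complex_of_real (real i - 1) * Q i (ReF (u (tau r i) F)) k
      + \<i> * complex_of_real (1 / real i - 1) * Q i (ImF (u (tau r i) F)) k)"
  by (cases "k \<in> open_shell i") (simp_all add: u_T_on_open_shell[OF assms])

lemma borel_measurable_indicator_u_T:
  assumes F: "F \<in> borel_measurable borel" "\<And>j. bounded (F ` shell j)" and "1 \<le> i"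
  shows "(\<lambda>k. indicator (open_shell i) k * u (tau r i) (T r F) k) \<in> borel_measurable borel"
proof -
  have [measurable]: "F \<in> borel_measurable borel" by (rule F(1))
  have [measurable]: "Q i (ReF (u (tau r i) F)) \<in> borel_measurable borel" "Q i (ImF (u (tau r i) F)) \<in> borel_measurable borel"
    using bounded_ReF_ImF_u[OF F(2)] by (auto intro!: borel_measurable_Q)
  show ?thesis unfolding indicator_open_shell_u_T[OF assms] by measurable
qed

lemma Re_l2_inner_zeta0_u_T:
  assumes F: "F \<in> borel_measurable borel" "\<And>j. bounded (F ` shell j)" and "1 \<le> i"
  shows "Re (l2_inner (\<lambda>k. complex_of_real (zeta0 i (norm k)))
              (\<lambda>k. indicator (open_shell i) k * u (tau r i) (T r F) k))
         = real i * (\<integral>k. zeta0 i (norm k) * Re (u (tau r i) F k) \<partial>lborel)"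
proof -
  define h where "h = (\<lambda>k::R3. complex_of_real (zeta0 i (norm k)))"
  define G where "G = u (tau r i) F"
  define qR where "qR = Q i (ReF G)"
  define qI where "qI = Q i (ImF G)"
  define c1 where "c1 = complex_of_real (real i - 1)"
  define c2 where "c2 = \<i> * complex_of_real (1 / real i - 1)"
  define \<Phi> where "\<Phi> = (\<lambda>k. G k + c1 * qR k + c2 * qI k)"
  have hV: "h \<in> Vspace i" unfolding h_def by (rule zeta0_in_Vspace)
  have [measurable]: "G \<in> borel_measurable borel" unfolding G_def using F(1) by measurable
  have G: "bounded (G ` shell i)" "bounded (ReF G ` shell i)" "bounded (ImF G ` shell i)"
    unfolding G_def using bounded_ReF_ImF_u[OF F(2)] by auto
  have "ReF G \<in> borel_measurable borel" "ImF G \<in> borel_measurable borel" by measurable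
  then have q: "Linf_c qR" "Linf_c qI"
    unfolding qR_def qI_def using G Linf_c_Vspace[OF Q_Vspace(1)] by blast+
  then have [measurable]: "qR \<in> borel_measurable borel" "qI \<in> borel_measurable borel"
    by (auto intro: Linf_c_measurable)
  have int: "integrable lborel (\<lambda>k. cnj (h k) * G k)" "integrable lborel (\<lambda>k. cnj (h k) * qR k)"
      "integrable lborel (\<lambda>k. cnj (h k) * qI k)" "integrable lborel (\<lambda>k. cnj (h k) * ReF G k)"
      "integrable lborel (\<lambda>k. cnj (h k) * ImF G k)"
    using G q by (auto intro!: integrable_cnj_mult_Vspace[OF hV] bounded_image_Linf_c)
  have "l2_inner h (\<lambda>k. indicator (open_shell i) k * u (tau r i) (T r F) k)
      = l2_inner h (\<lambda>k. indicator (open_shell i) k * \<Phi> k)"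
    by (simp add: indicator_open_shell_u_T[OF F \<open>1 \<le> i\<close>] \<Phi>_def G_def qR_def qI_def c1_def c2_def)
  also have "\<dots> = l2_inner h \<Phi>"
    by (rule l2_inner_indicator_open_shell[OF hV]) (simp add: \<Phi>_def; measurable)
  also have "\<dots> = l2_inner h G + c1 * l2_inner h qR + c2 * l2_inner h qI"
  proof -
    have "(\<lambda>k. cnj (h k) * \<Phi> k) = (\<lambda>k. cnj (h k) * G k + (c1 * (cnj (h k) * qR k) + c2 * (cnj (h k) * qI k)))"
      by (simp add: \<Phi>_def fun_eq_iff algebra_simps)
    then show ?thesis
      unfolding l2_inner_def using int
      by (simp add: Bochner_Integration.integrable_add integrable_mult_right add.assoc)
  qed
  also have "l2_inner h qR = l2_inner h (ReF G)"
    unfolding qR_def using G by (auto intro!: l2_inner_Q hV)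
  also have "l2_inner h qI = l2_inner h (ImF G)"
    unfolding qI_def using G by (auto intro!: l2_inner_Q hV)
  also have "l2_inner h G = l2_inner h (ReF G) + \<i> * l2_inner h (ImF G)"
    by (rule l2_inner_ReF_ImF[OF int(4,5)])
  also have "l2_inner h (ReF G) = complex_of_real (\<integral>k. zeta0 i (norm k) * Re (G k) \<partial>lborel)"
    unfolding l2_inner_def h_def ReF_def by (simp flip: of_real_mult)
  also have "l2_inner h (ImF G) = complex_of_real (\<integral>k. zeta0 i (norm k) * Im (G k) \<partial>lborel)"
    unfolding l2_inner_def h_def ImF_def by (simp flip: of_real_mult)
  finally show ?thesis
    unfolding h_def by (simp add: G_def c1_def c2_def algebra_simps)
qed

lemma nn_integral_T_sq_ge:
  assumes F: "F \<in> borel_measurable borel" "\<And>j. bounded (F ` shell j)" and "1 \<le> i"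
  shows "ennreal ((real i * (\<integral>k. zeta0 i (norm k) * Re (u (tau r i) F k) \<partial>lborel))\<^sup>2)
    \<le> ennreal (28/3 * pi / ln 2) * (\<integral>\<^sup>+k. ennreal ((cmod (T r F k))\<^sup>2) \<partial>lborel)"
proof -
  define h where "h = (\<lambda>k::R3. complex_of_real (zeta0 i (norm k)))"
  define \<psi> where "\<psi> = (\<lambda>k. indicator (open_shell i) k * u (tau r i) (T r F) k)"
  have "(real i * (\<integral>k. zeta0 i (norm k) * Re (u (tau r i) F k) \<partial>lborel))\<^sup>2 = (Re (l2_inner h \<psi>))\<^sup>2"
    unfolding h_def \<psi>_def Re_l2_inner_zeta0_u_T[OF assms] ..
  also have "\<dots> \<le> (cmod (l2_inner h \<psi>))\<^sup>2"
    by (simp add: cmod_power2)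
  finally have "ennreal ((real i * (\<integral>k. zeta0 i (norm k) * Re (u (tau r i) F k) \<partial>lborel))\<^sup>2)
      \<le> ennreal ((cmod (l2_inner h \<psi>))\<^sup>2)"
    by (rule ennreal_leI)
  also have "\<dots> \<le> (\<integral>\<^sup>+k. ennreal ((cmod (h k))\<^sup>2) \<partial>lborel) * (\<integral>\<^sup>+k. ennreal ((cmod (\<psi> k))\<^sup>2) \<partial>lborel)"
    using borel_measurable_indicator_u_T[OF assms]
    by (intro l2_inner_Cauchy_Schwarz) (simp_all add: h_def \<psi>_def)
  also have "\<dots> \<le> ennreal (28/3 * pi / ln 2) * (\<integral>\<^sup>+k. ennreal ((cmod (T r F k))\<^sup>2) \<partial>lborel)"
  proof (intro mult_mono nn_integral_mono)
    show "(\<integral>\<^sup>+k. ennreal ((cmod (h k))\<^sup>2) \<partial>lborel) \<le> ennreal (28/3 * pi / ln 2)"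
      using nn_integral_zeta0_sq_le[of i] by (simp add: h_def)
    show "ennreal ((cmod (\<psi> k))\<^sup>2) \<le> ennreal ((cmod (T r F k))\<^sup>2)" for k
      by (simp add: \<psi>_def norm_mult split: split_indicator)
  qed simp_all
  finally show ?thesis .
qed

section \<open>Lower bound for \<open>\<parallel>T\<^sub>r F\<^sub>R\<parallel>\<close>\<close>

lemma norm_exp_minus_i_mult_of_real: "cmod (exp (- \<i> * complex_of_real t) * complex_of_real y) = \<bar>y\<bar>"
proof -
  have "exp (- \<i> * complex_of_real t) = exp (\<i> * complex_of_real (- t))" by simp
  then show ?thesis by (simp add: norm_mult)
qed

lemma continuous_on_fourier3:
  assumes cont: "continuous_on UNIV \<eta>" and int: "integrable lborel \<eta>"
  shows "continuous_on UNIV (fourier3 \<eta>)"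
proof -
  have [measurable]: "\<eta> \<in> borel_measurable borel" using borel_measurable_continuous_onI[OF cont] .
  have "isCont (\<lambda>k. \<integral>x. exp (- \<i> * complex_of_real (k \<bullet> x)) * complex_of_real (\<eta> x) \<partial>lborel) k0" for k0
  proof (rule continuous_at_sequentiallyI)
    fix k :: "nat \<Rightarrow> R3" assume "k \<longlonglongrightarrow> k0"
    then show "(\<lambda>n. \<integral>x. exp (- \<i> * complex_of_real (k n \<bullet> x)) * complex_of_real (\<eta> x) \<partial>lborel) \<longlonglongrightarrow>
        (\<integral>x. exp (- \<i> * complex_of_real (k0 \<bullet> x)) * complex_of_real (\<eta> x) \<partial>lborel)"
      by (intro integral_dominated_convergence[where w="\<lambda>x. \<bar>\<eta> x\<bar>"] integrable_abs int AE_I2 tendsto_intros)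
        (simp_all only: norm_exp_minus_i_mult_of_real order_refl, measurable)
  qed
  then show ?thesis unfolding fourier3_def[abs_def]
    by (intro continuous_intros) (simp add: continuous_on_eq_continuous_at)
qed

lemma norm_fourier3_le: "cmod (fourier3 \<eta> k) \<le> (2 * pi) powr (-3/2) * (\<integral>x. \<bar>\<eta> x\<bar> \<partial>lborel)"
proof -
  have "cmod (fourier3 \<eta> k) = (2 * pi) powr (-3/2) *
      cmod (\<integral>x. exp (- \<i> * complex_of_real (k \<bullet> x)) * complex_of_real (\<eta> x) \<partial>lborel)"
    by (simp add: fourier3_def norm_mult)
  also have "\<dots> \<le> (2 * pi) powr (-3/2) * (\<integral>x. \<bar>\<eta> x\<bar> \<partial>lborel)"
    by (intro mult_left_mono order.trans[OF integral_norm_bound])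
      (auto simp only: norm_exp_minus_i_mult_of_real powr_ge_zero)
  finally show ?thesis .
qed

lemma test_function_continuous: "test_function \<eta> \<Longrightarrow> continuous_on UNIV \<eta>"
  unfolding test_function_def by (auto elim: smooth3.cases)

lemma test_function_integrable:
  assumes "test_function \<eta>"
  shows "integrable lborel \<eta>"
proof -
  define K where "K = closure {x. \<eta> x \<noteq> 0}"
  have "integrable lborel (\<lambda>x. indicator K x *\<^sub>R \<eta> x)"
    using assms unfolding test_function_def K_def
    by (intro borel_integrable_compact continuous_on_subset[OF test_function_continuous[OF assms]]) auto
  moreover have "(\<lambda>x. indicator K x *\<^sub>R \<eta> x) = \<eta>"
    using closure_subset[of "{x. \<eta> x \<noteq> 0}"] by (force simp: fun_eq_iff K_def indicator_def)
  ultimately show ?thesis by simp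
qed

lemma continuous_pos_lower_bound:
  fixes f :: "'a::topological_space \<Rightarrow> real"
  assumes "compact S" "continuous_on S f" "\<And>x. x \<in> S \<Longrightarrow> 0 < f x"
  obtains m where "0 < m" "\<And>x. x \<in> S \<Longrightarrow> m \<le> f x"
proof (cases "S = {}")
  case False
  then obtain x0 where "x0 \<in> S" "\<forall>y\<in>S. f x0 \<le> f y"
    using continuous_attains_inf[OF assms(1) False assms(2)] by blast
  then show ?thesis using that[of "f x0"] assms(3) by auto
qed (use that[of 1] in auto)

text \<open>This is where \<open>r \<ge> 0\<close> and the choice of scale enter: the phase of \<open>u (tau r i) F\<^sub>R\<close>
  on shell \<open>i\<close> stays below \<open>3/2 < \<pi>/2\<close>.\<close>

lemma cos_phase_ge:
  assumes "r \<ge> 0" "\<tau> > 0" "1 \<le> i" "k \<in> shell i"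
  shows "cos (3/2) \<le> cos (norm k * tau r i + 1 / (2 * \<tau>) / eps i * norm k * \<tau>)"
proof -
  have \<epsilon>: "0 < eps i" "eps i \<le> 1" using eps_pos eps_le_1[OF \<open>1 \<le> i\<close>] by auto
  have \<rho>: "norm k \<le> eps i" "0 < norm k" using assms(4) norm_pos_if_shell by (auto simp: shell_def)
  have "norm k * tau r i \<le> eps i * tau r i" using \<rho> by (intro mult_right_mono) (auto simp: tau_def)
  also have "\<dots> = eps i powr r" using \<epsilon> by (simp add: tau_def powr_mult_base)
  also have "\<dots> \<le> 1" using \<epsilon> \<open>r \<ge> 0\<close> by (intro powr_le1) auto
  finally have "norm k * tau r i \<le> 1" .
  moreover have "1 / (2 * \<tau>) / eps i * norm k * \<tau> \<le> 1 / (2 * \<tau>) / eps i * eps i * \<tau>"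
    using \<rho> \<epsilon> \<open>\<tau> > 0\<close> by (intro mult_right_mono mult_left_mono) auto
  moreover have "1 / (2 * \<tau>) / eps i * eps i * \<tau> = 1 / 2" using \<epsilon> \<open>\<tau> > 0\<close> by simp
  moreover have "0 \<le> norm k * tau r i + 1 / (2 * \<tau>) / eps i * norm k * \<tau>"
    using \<rho> \<epsilon> \<open>\<tau> > 0\<close> by (simp add: tau_def)
  ultimately show ?thesis
    using pi_gt3 by (intro cos_monotone_0_pi_le) auto
qed

definition FR :: "real \<Rightarrow> (R3 \<Rightarrow> complex) \<Rightarrow> real \<Rightarrow> R3 \<Rightarrow> complex" where
  "FR \<tau> \<phi> R = (\<lambda>k. complex_of_real (R powr (3/2)) *
     (complex_of_real (norm (R *\<^sub>R k) powr (-1/2)) * exp (\<i> * complex_of_real (norm (R *\<^sub>R k) * \<tau>))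
      * \<phi> (R *\<^sub>R k)))"

text \<open>\<open>\<phi>\<close> stands for the Fourier transform of \<open>\<eta>\<close>; only these properties of it are used.\<close>

locale positive_profile =
  fixes \<phi> :: "R3 \<Rightarrow> complex"
  assumes continuous: "continuous_on UNIV \<phi>"
    and bounded: "bounded (range \<phi>)"
    and real: "\<And>k. Im (\<phi> k) = 0"
    and positive: "\<And>k. 0 < Re (\<phi> k)"
begin

lemma annulus_Re_lower_bound:
  obtains m where "0 < m" "\<And>s. a \<le> norm s \<Longrightarrow> norm s \<le> b \<Longrightarrow> m \<le> Re (\<phi> s)"
proof -
  define A where "A = {s::R3. a \<le> norm s \<and> norm s \<le> b}"
  have "bounded A" by (rule bounded_subset[OF bounded_cball[of 0 b]]) (auto simp: A_def)
  moreover have "closed A" unfolding A_def by (intro closed_Collect_conj closed_Collect_le continuous_intros)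
  ultimately have "compact A" by (simp add: compact_eq_bounded_closed)
  moreover have "continuous_on A (\<lambda>s. Re (\<phi> s))"
    by (intro continuous_intros continuous_on_subset[OF continuous]) auto
  ultimately obtain m where "0 < m" "\<And>s. s \<in> A \<Longrightarrow> m \<le> Re (\<phi> s)"
    using continuous_pos_lower_bound positive by metis
  then show thesis using that by (auto simp: A_def)
qed

lemma borel_measurable_FR [measurable]: "FR \<tau> \<phi> R \<in> borel_measurable borel"
proof -
  have [measurable]: "(\<lambda>k. \<phi> (R *\<^sub>R k)) \<in> borel_measurable borel"
    by (intro borel_measurable_continuous_onI continuous_on_compose2[OF continuous] continuous_intros) auto
  show ?thesis unfolding FR_def by measurable
qed

lemma bounded_FR_shell:
  assumes "R > 0"
  shows "bounded (FR \<tau> \<phi> R ` shell j)"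
proof -
  obtain B where B: "\<And>k. cmod (\<phi> k) \<le> B" using bounded unfolding bounded_iff by blast
  have "cmod (FR \<tau> \<phi> R k) \<le> R powr (3/2) * (R * eps (Suc j)) powr (-1/2) * B" if "k \<in> shell j" for k
  proof -
    have "cmod (FR \<tau> \<phi> R k) = R powr (3/2) * (R * norm k) powr (-1/2) * cmod (\<phi> (R *\<^sub>R k))"
      using assms by (simp add: FR_def norm_mult)
    also have "\<dots> \<le> R powr (3/2) * (R * eps (Suc j)) powr (-1/2) * B"
      using assms that eps_pos[of "Suc j"] B
      by (intro mult_mono powr_mono2' mult_left_mono) (auto simp: shell_def)
    finally show ?thesis .
  qed
  then show ?thesis unfolding bounded_iff by blast
qed

lemma zeta0_Re_u_FR_ge:
  assumes "r \<ge> 0" "\<tau> > 0" "1 \<le> i" "k \<in> shell i" "m > 0"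
    and m: "\<And>s. 1 / (4 * \<tau>) \<le> norm s \<Longrightarrow> norm s \<le> 1 / (2 * \<tau>) \<Longrightarrow> m \<le> Re (\<phi> s)"
  shows "ln 2 powr (-1/2) * m * cos (3/2) / (2 * \<tau>) / eps i ^ 3
      \<le> zeta0 i (norm k) * Re (u (tau r i) (FR \<tau> \<phi> (1 / (2 * \<tau>) / eps i)) k)"
proof -
  define \<epsilon> \<rho> R where "\<epsilon> = eps i" and "\<rho> = norm k" and "R = 1 / (2 * \<tau>) / eps i"
  define \<theta> where "\<theta> = \<rho> * tau r i + R * \<rho> * \<tau>"
  have \<epsilon>: "0 < \<epsilon>" using eps_pos by (simp add: \<epsilon>_def)
  have \<rho>: "\<epsilon> / 2 \<le> \<rho>" "\<rho> \<le> \<epsilon>" "0 < \<rho>"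
    using \<open>k \<in> shell i\<close> norm_pos_if_shell by (auto simp: shell_def \<rho>_def \<epsilon>_def eps_Suc)
  have R: "0 < R" "R * \<epsilon> = 1 / (2 * \<tau>)" using \<epsilon> \<open>\<tau> > 0\<close> by (auto simp: R_def \<epsilon>_def)
  define y where "y = Re (\<phi> (R *\<^sub>R k))"
  have \<phi>_eq: "\<phi> (R *\<^sub>R k) = complex_of_real y" using real by (simp add: y_def complex_eq_iff)
  have norm_Rk: "norm (R *\<^sub>R k) = R * \<rho>" using R by (simp add: \<rho>_def)
  have y: "m \<le> y"
  proof -
    have "R * (\<epsilon> / 2) \<le> R * \<rho>" "R * \<rho> \<le> R * \<epsilon>"
      by (intro mult_left_mono; use \<rho> R in linarith)+
    moreover have "R * (\<epsilon> / 2) = 1 / (4 * \<tau>)" using R(2) by simp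
    ultimately have "1 / (4 * \<tau>) \<le> norm (R *\<^sub>R k)" "norm (R *\<^sub>R k) \<le> 1 / (2 * \<tau>)"
      using R(2) norm_Rk by linarith+
    then show ?thesis unfolding y_def by (rule m)
  qed
  have "u (tau r i) (FR \<tau> \<phi> R) k = complex_of_real (R powr (3/2) * (R * \<rho>) powr (-1/2) * y) * exp (\<i> * complex_of_real \<theta>)"
    unfolding u_def FR_def \<phi>_eq norm_Rk \<theta>_def
    by (simp add: \<rho>_def algebra_simps exp_add[symmetric] distrib_left)
  then have Re_u: "Re (u (tau r i) (FR \<tau> \<phi> R) k) = R powr (3/2) * (R * \<rho>) powr (-1/2) * y * cos \<theta>"
    by (simp add: Re_exp)
  have cos: "cos (3/2) \<le> cos \<theta>" "0 < cos (3/2::real)"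
    using cos_phase_ge[OF assms(1-4)] pi_gt3 by (auto simp: \<theta>_def \<rho>_def R_def intro: cos_gt_zero_pi)
  have "\<rho> powr (-3/2) * (R powr (3/2) * (R * \<rho>) powr (-1/2)) = (R powr (3/2) * R powr (-1/2)) * (\<rho> powr (-3/2) * \<rho> powr (-1/2))"
    using \<rho>(3) R(1) by (simp add: powr_mult mult_ac)
  also have "\<dots> = R powr 1 * \<rho> powr (-2)"
    by (simp only: powr_add[symmetric]) simp
  also have "\<dots> = R / \<rho>\<^sup>2"
    using \<rho>(3) R(1) by (simp add: powr_minus divide_inverse)
  finally have powers: "\<rho> powr (-3/2) * (R powr (3/2) * (R * \<rho>) powr (-1/2)) = R / \<rho>\<^sup>2" .
  have "ln 2 powr (-1/2) * m * cos (3/2) / (2 * \<tau>) / \<epsilon> ^ 3 = ln 2 powr (-1/2) * (R / \<epsilon>\<^sup>2) * m * cos (3/2)"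
    using R \<epsilon> by (simp add: R_def \<epsilon>_def power2_eq_square power3_eq_cube)
  also have "\<dots> \<le> ln 2 powr (-1/2) * (R / \<rho>\<^sup>2) * y * cos \<theta>"
    using \<rho> R y cos \<open>m > 0\<close>
    by (intro mult_mono divide_left_mono power_mono) (auto intro: order.trans[OF less_imp_le])
  also have "\<dots> = zeta0 i \<rho> * Re (u (tau r i) (FR \<tau> \<phi> R) k)"
    unfolding Re_u zeta0_shell[OF \<open>k \<in> shell i\<close>, folded \<rho>_def] powers[symmetric] by (simp add: mult_ac)
  finally show ?thesis by (simp add: \<epsilon>_def \<rho>_def R_def)
qed

lemma integral_zeta0_Re_u_FR_ge:
  assumes "r \<ge> 0" "\<tau> > 0" "1 \<le> i" "m > 0"
    and m: "\<And>s. 1 / (4 * \<tau>) \<le> norm s \<Longrightarrow> norm s \<le> 1 / (2 * \<tau>) \<Longrightarrow> m \<le> Re (\<phi> s)"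
  shows "7/6 * pi * (ln 2 powr (-1/2) * m * cos (3/2) / (2 * \<tau>))
      \<le> (\<integral>k. zeta0 i (norm k) * Re (u (tau r i) (FR \<tau> \<phi> (1 / (2 * \<tau>) / eps i)) k) \<partial>lborel)"
proof -
  define F where "F = FR \<tau> \<phi> (1 / (2 * \<tau>) / eps i)"
  define c where "c = ln 2 powr (-1/2) * m * cos (3/2) / (2 * \<tau>) / eps i ^ 3"
  have "bounded (u (tau r i) F ` shell i)"
    unfolding F_def using \<open>\<tau> > 0\<close> eps_pos[of i]
    by (intro bounded_ReF_ImF_u(3) bounded_FR_shell) simp
  then have "integrable lborel (\<lambda>k. cnj (complex_of_real (zeta0 i (norm k))) * u (tau r i) F k)"
    by (intro integrable_cnj_mult_Vspace[OF zeta0_in_Vspace]) (simp_all add: F_def)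
  from integrable_Re[OF this]
  have int: "integrable lborel (\<lambda>k. zeta0 i (norm k) * Re (u (tau r i) F k))" by simp
  have "c * indicator (shell i) k \<le> zeta0 i (norm k) * Re (u (tau r i) F k)" for k
    using zeta0_Re_u_FR_ge[OF assms(1-3) _ assms(4) m]
    by (cases "k \<in> shell i") (auto simp: c_def F_def zeta0_eq_0)
  then have "(\<integral>k. c * indicator (shell i) k \<partial>lborel) \<le> (\<integral>k. zeta0 i (norm k) * Re (u (tau r i) F k) \<partial>lborel)"
    by (intro integral_mono int integrable_mult_right integrable_real_indicator emeasure_shell_finite) simp_all
  moreover have "(\<integral>k. c * indicator (shell i) k \<partial>lborel) = 7/6 * pi * (ln 2 powr (-1/2) * m * cos (3/2) / (2 * \<tau>))"
    using eps_pos[of i] emeasure_shell_finite[of i] by (simp add: c_def measure_shell)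
  ultimately show ?thesis by (simp add: F_def)
qed

lemma l2_norm_T_FR_ge:
  assumes "r \<ge> 0" "\<tau> > 0"
  obtains c where "0 < c" "\<And>i. 1 \<le> i \<Longrightarrow> ennreal (c * real i) \<le> l2_norm (T r (FR \<tau> \<phi> (1 / (2 * \<tau>) / eps i)))"
proof -
  obtain m where m: "0 < m" "\<And>s. 1 / (4 * \<tau>) \<le> norm s \<Longrightarrow> norm s \<le> 1 / (2 * \<tau>) \<Longrightarrow> m \<le> Re (\<phi> s)"
    using annulus_Re_lower_bound[where a = "1 / (4 * \<tau>)" and b = "1 / (2 * \<tau>)"] by blast
  define c0 where "c0 = 7/6 * pi * (ln 2 powr (-1/2) * m * cos (3/2) / (2 * \<tau>))"
  define C0 where "C0 = 28/3 * pi / ln (2::real)"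
  have "0 < cos (3/2::real)" using pi_gt3 by (intro cos_gt_zero_pi) auto
  then have c0: "0 < c0" using m(1) \<open>\<tau> > 0\<close> by (simp add: c0_def)
  have C0: "0 < C0" by (simp add: C0_def)
  show thesis
  proof (rule that)
    show "0 < c0 / sqrt C0" using c0 C0 by simp
    fix i :: nat assume "1 \<le> i"
    define F where "F = FR \<tau> \<phi> (1 / (2 * \<tau>) / eps i)"
    have F: "F \<in> borel_measurable borel" "bounded (F ` shell j)" for j
      unfolding F_def using \<open>\<tau> > 0\<close> eps_pos[of i] by (auto intro: bounded_FR_shell)
    have "c0 \<le> (\<integral>k. zeta0 i (norm k) * Re (u (tau r i) F k) \<partial>lborel)"
      unfolding c0_def F_def
      by (rule integral_zeta0_Re_u_FR_ge[OF assms \<open>1 \<le> i\<close> m])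
    then have "c0 * real i \<le> real i * (\<integral>k. zeta0 i (norm k) * Re (u (tau r i) F k) \<partial>lborel)"
      by (subst mult.commute) (rule mult_left_mono; simp)
    then have "(c0 * real i)\<^sup>2 \<le> (real i * (\<integral>k. zeta0 i (norm k) * Re (u (tau r i) F k) \<partial>lborel))\<^sup>2"
      using c0 by (intro power_mono) auto
    moreover have "C0 * (c0 / sqrt C0 * real i)\<^sup>2 = (c0 * real i)\<^sup>2"
      using C0 by (simp add: power_mult_distrib power_divide)
    ultimately have "ennreal C0 * ennreal ((c0 / sqrt C0 * real i)\<^sup>2)
        \<le> ennreal ((real i * (\<integral>k. zeta0 i (norm k) * Re (u (tau r i) F k) \<partial>lborel))\<^sup>2)"
      using C0 by (simp flip: ennreal_mult)
    also have "\<dots> \<le> ennreal C0 * (\<integral>\<^sup>+k. ennreal ((cmod (T r F k))\<^sup>2) \<partial>lborel)"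
      unfolding C0_def by (rule nn_integral_T_sq_ge[OF F \<open>1 \<le> i\<close>])
    finally have "ennreal ((c0 / sqrt C0 * real i)\<^sup>2) \<le> (\<integral>\<^sup>+k. ennreal ((cmod (T r F k))\<^sup>2) \<partial>lborel)"
      using C0 ennreal_mult_le_mult_iff[of "ennreal C0"] by auto
    then show "ennreal (c0 / sqrt C0 * real i) \<le> l2_norm (T r (FR \<tau> \<phi> (1 / (2 * \<tau>) / eps i)))"
      using c0 C0 unfolding F_def by (intro l2_norm_ge) simp_all
  qed
qed

end

lemma positive_profile_fourier3:
  assumes "test_function \<eta>" "\<And>k. Im (fourier3 \<eta> k) = 0" "\<And>k. 0 < Re (fourier3 \<eta> k)"
  shows "positive_profile (fourier3 \<eta>)"
proof
  show "continuous_on UNIV (fourier3 \<eta>)"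
    using continuous_on_fourier3 test_function_continuous test_function_integrable assms(1) by blast
  show "bounded (range (fourier3 \<eta>))"
    unfolding bounded_iff using norm_fourier3_le by blast
qed (use assms in auto)

lemma eps_Suc_eq_power: "eps (Suc n) = (1 / 2) ^ n"
  by (simp add: eps_def powr_minus powr_realpow power_one_over inverse_eq_divide)

lemma filterlim_divide_eps_at_top:
  assumes "0 < c"
  shows "filterlim (\<lambda>n. c / eps (Suc n)) at_top sequentially"
proof -
  have "(\<lambda>n. eps (Suc n)) \<longlonglongrightarrow> 0"
    unfolding eps_Suc_eq_power by (rule LIMSEQ_realpow_zero) simp_all
  then have "filterlim (\<lambda>n. inverse (eps (Suc n))) at_top sequentially"
    by (rule filterlim_inverse_at_top) (simp add: eps_pos)
  then show ?thesis
    unfolding divide_inverse[of c] using assms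
    by (intro filterlim_tendsto_pos_mult_at_top[OF tendsto_const])
qed

lemma tendsto_infinity_if_linear_lower_bound:
  fixes f :: "nat \<Rightarrow> ennreal"
  assumes "0 < c" "\<And>n. ennreal (c * real (Suc n)) \<le> f n"
  shows "(f \<longlongrightarrow> \<infinity>) sequentially"
proof (rule tendsto_sandwich[of "\<lambda>n. ennreal (c * real (Suc n))" _ _ "\<lambda>n. \<infinity>"])
  have "filterlim (\<lambda>n. c * real (Suc n)) at_top sequentially"
    by (rule filterlim_tendsto_pos_mult_at_top[OF tendsto_const assms(1)
          filterlim_compose[OF filterlim_real_sequentially filterlim_Suc]])
  then show "(\<lambda>n. ennreal (c * real (Suc n))) \<longlonglongrightarrow> \<infinity>"
    by (simp add: ennreal_tendsto_top_eq_at_top)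
qed (use assms(2) in simp_all)

theorem mainTheorem5:
  fixes r \<tau> :: real and \<eta> :: "R3 \<Rightarrow> real"
  assumes "r \<ge> 0"
    and "test_function \<eta>"
    and "\<forall>x y. norm x = norm y \<longrightarrow> \<eta> x = \<eta> y"
    and "\<forall>k. Im (fourier3 \<eta> k) = 0 \<and> Re (fourier3 \<eta> k) > 0"
    and "\<tau> > 0"
    and "closure {x. \<eta> x \<noteq> 0} \<subseteq> ball 0 \<tau>"
  shows "\<exists>Rs :: nat \<Rightarrow> real. (\<forall>n. Rs n > 0) \<and> filterlim Rs at_top sequentially \<and>
     ((\<lambda>n. l2_norm (T r (\<lambda>k. complex_of_real ((Rs n) powr (3/2)) *
            (complex_of_real (norm (Rs n *\<^sub>R k) powr (-1/2))
             * exp (\<i> * complex_of_real (norm (Rs n *\<^sub>R k) * \<tau>))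
             * fourier3 \<eta> (Rs n *\<^sub>R k))))) \<longlongrightarrow> \<infinity>) sequentially"
proof -
  interpret positive_profile "fourier3 \<eta>"
    by (rule positive_profile_fourier3) (use assms(2,4) in auto)
  obtain c where c: "0 < c"
    "\<And>i. 1 \<le> i \<Longrightarrow> ennreal (c * real i) \<le> l2_norm (T r (FR \<tau> (fourier3 \<eta>) (1 / (2 * \<tau>) / eps i)))"
    using l2_norm_T_FR_ge[OF assms(1,5)] by blast
  define Rs where "Rs n = 1 / (2 * \<tau>) / eps (Suc n)" for n
  have "Rs n > 0" for n using assms(5) eps_pos by (simp add: Rs_def)
  moreover have "filterlim Rs at_top sequentially"
    unfolding Rs_def[abs_def] using assms(5) by (intro filterlim_divide_eps_at_top) simp
  moreover have "((\<lambda>n. l2_norm (T r (FR \<tau> (fourier3 \<eta>) (Rs n)))) \<longlongrightarrow> \<infinity>) sequentially"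
    unfolding Rs_def by (intro tendsto_infinity_if_linear_lower_bound[OF c(1)] c(2)) simp
  ultimately show ?thesis
    by (intro exI[of _ Rs]) (simp add: FR_def)
qed

end
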